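(* Let $f^{(0)}$ be a harmonic function in a Jordan domain in $\mathbb{C}$ (with coordinate $w=x+iy$) with nonvanishing Hessian. Let $g(w)$ be a complex analytic function with real part $f^{(0)}(w)/2$, and let $h(w)$ be an antiderivative of a continuous branch of $\sqrt{g''(w)}$. Then the function $$f(w,t)=2\,\mathrm{Re}\,g(w)+|h(w)|^2\,t+\mathrm{Re}\!\left(h(w)^2\right)\log|h'(w)|\,t^2$$ satisfies $f_{w\bar w}=t\sqrt{f_{ww}f_{\bar w\bar w}}+o(t^2)$ as $t\to0$.
   Context: Wirtinger derivatives: $f_w=\tfrac12(f_x-if_y)$, $f_{\bar w}=\tfrac12(f_x+if_y)$. *)

theory Defs
  imports "HOL-Complex_Analysis.Complex_Analysis"
begin

text \<open>Plane coordinates w = x + i y. Partial derivatives of a function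
  F :: complex => complex (real-valued functions are embedded via of_real).\<close>

definition dx :: "(complex \<Rightarrow> complex) \<Rightarrow> complex \<Rightarrow> complex" where
  "dx F w = vector_derivative (\<lambda>s::real. F (w + of_real s)) (at 0)"

definition dy :: "(complex \<Rightarrow> complex) \<Rightarrow> complex \<Rightarrow> complex" where
  "dy F w = vector_derivative (\<lambda>s::real. F (w + \<i> * of_real s)) (at 0)"

definition wirt :: "(complex \<Rightarrow> complex) \<Rightarrow> complex \<Rightarrow> complex" where
  "wirt F w = (dx F w - \<i> * dy F w) / 2"

definition wirt_bar :: "(complex \<Rightarrow> complex) \<Rightarrow> complex \<Rightarrow> complex" where
  "wirt_bar F w = (dx F w + \<i> * dy F w) / 2"

definition C2_on :: "complex set \<Rightarrow> (complex \<Rightarrow> real) \<Rightarrow> bool" where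
  "C2_on D f \<longleftrightarrow>
     (let F = (\<lambda>w. complex_of_real (f w)) in
       (\<forall>w\<in>D. F differentiable (at w)) \<and>
       (\<forall>w\<in>D. dx F differentiable (at w) \<and> dy F differentiable (at w)) \<and>
       continuous_on D (dx (dx F)) \<and> continuous_on D (dx (dy F)) \<and>
       continuous_on D (dy (dx F)) \<and> continuous_on D (dy (dy F)))"

definition harmonic_on :: "complex set \<Rightarrow> (complex \<Rightarrow> real) \<Rightarrow> bool" where
  "harmonic_on D f \<longleftrightarrow> open D \<and> C2_on D f \<and>
     (\<forall>w\<in>D. dx (dx (\<lambda>z. complex_of_real (f z))) w
              + dy (dy (\<lambda>z. complex_of_real (f z))) w = 0)"

definition hessian_det :: "(complex \<Rightarrow> real) \<Rightarrow> complex \<Rightarrow> complex" where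
  "hessian_det f w = (let F = (\<lambda>z. complex_of_real (f z)) in
     dx (dx F) w * dy (dy F) w - dy (dx F) w * dx (dy F) w)"

definition jordan_domain :: "complex set \<Rightarrow> bool" where
  "jordan_domain D \<longleftrightarrow> (\<exists>c. simple_path c \<and> pathfinish c = pathstart c \<and>
                              D = inside (path_image c))"

end

theory Submission
  imports Defs
begin

(* Since f is real, f_wbar = conj f_w, so f_wbarwbar = conj f_ww and sqrt (f_ww f_wbarwbar) = |f_ww|.
   Holomorphic functions have vanishing wbar-derivative and ln |h'| is locally the real part of a
   holomorphic logarithm of h', so Wirtinger calculus gives
     f_ww    = g'' + t h'' conj h + O(t^2),
     f_wwbar = t |h'|^2 + t^2 Re (h'' conj h conj (h'^2)) / |h'|^2.
   The Hessian of f0 = 2 Re g is -4 |g''|^2, so g'' = h'^2 does not vanish, and the first-order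
   expansion |a0 + t a1 + O(t^2)| = |a0| + t Re (a1 conj a0) / |a0| + O(t^2) of the modulus
   reproduces exactly these two coefficients. *)

(* Every real-linear map of the plane is d \<mapsto> a d + b (conj d); a and b are then F_w and F_wbar. *)
definition has_wirtinger_derivatives ::
    "(complex \<Rightarrow> complex) \<Rightarrow> complex \<Rightarrow> complex \<Rightarrow> complex \<Rightarrow> bool" where
  "has_wirtinger_derivatives F a b z \<longleftrightarrow> (F has_derivative (\<lambda>d. a * d + b * cnj d)) (at z)"

lemma has_wirtinger_derivatives_directional:
  assumes "has_wirtinger_derivatives F a b z"
  shows "vector_derivative (\<lambda>s::real. F (z + v * of_real s)) (at 0) = a * v + b * cnj v"
proof -
  have "((\<lambda>s::real. z + v * of_real s) has_derivative (\<lambda>d. v * of_real d)) (at 0)"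
    by (auto intro!: derivative_eq_intros)
  moreover have "(F has_derivative (\<lambda>d. a * d + b * cnj d)) (at (z + v * of_real 0))"
    using assms unfolding has_wirtinger_derivatives_def by simp
  ultimately have "((\<lambda>s. F (z + v * of_real s)) has_derivative
                     (\<lambda>d. a * (v * of_real d) + b * cnj (v * of_real d))) (at 0)"
    by (rule has_derivative_compose[unfolded o_def])
  moreover have "(\<lambda>d. a * (v * of_real d) + b * cnj (v * of_real d)) = (\<lambda>d::real. d *\<^sub>R (a * v + b * cnj v))"
    by (auto simp: fun_eq_iff scaleR_conv_of_real algebra_simps)
  ultimately have "((\<lambda>s. F (z + v * of_real s)) has_vector_derivative (a * v + b * cnj v)) (at 0)"
    unfolding has_vector_derivative_def by simp
  then show ?thesis
    by (rule vector_derivative_at)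
qed

lemma has_wirtinger_derivatives_dx:
  "has_wirtinger_derivatives F a b z \<Longrightarrow> dx F z = a + b"
  using has_wirtinger_derivatives_directional[of F a b z 1] by (simp add: dx_def)

lemma has_wirtinger_derivatives_dy:
  "has_wirtinger_derivatives F a b z \<Longrightarrow> dy F z = \<i> * (a - b)"
  using has_wirtinger_derivatives_directional[of F a b z \<i>] by (simp add: dy_def algebra_simps)

lemma has_wirtinger_derivatives_wirt:
  "has_wirtinger_derivatives F a b z \<Longrightarrow> wirt F z = a"
  by (simp add: wirt_def has_wirtinger_derivatives_dx has_wirtinger_derivatives_dy algebra_simps)

lemma has_wirtinger_derivatives_wirt_bar:
  "has_wirtinger_derivatives F a b z \<Longrightarrow> wirt_bar F z = b"
  by (simp add: wirt_bar_def has_wirtinger_derivatives_dx has_wirtinger_derivatives_dy algebra_simps)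

lemma has_wirtinger_derivatives_cong:
  "has_wirtinger_derivatives F a b z \<Longrightarrow> a = a' \<Longrightarrow> b = b' \<Longrightarrow> has_wirtinger_derivatives F a' b' z"
  by simp

lemma has_wirtinger_derivatives_transform:
  assumes "has_wirtinger_derivatives F a b z" "\<forall>\<^sub>F w in nhds z. F w = G w"
  shows "has_wirtinger_derivatives G a b z"
proof -
  from assms(2) have "\<forall>\<^sub>F w in at z. F w = G w" "F z = G z"
    by (simp_all add: eventually_nhds_conv_at)
  with assms(1) show ?thesis
    unfolding has_wirtinger_derivatives_def by (auto intro: has_derivative_transform_eventually)
qed

lemma has_wirtinger_derivatives_holomorphic:
  "(F has_field_derivative a) (at z) \<Longrightarrow> has_wirtinger_derivatives F a 0 z"
  unfolding has_wirtinger_derivatives_def has_field_derivative_def by simp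

lemma has_wirtinger_derivatives_const: "has_wirtinger_derivatives (\<lambda>_. c) 0 0 z"
  unfolding has_wirtinger_derivatives_def by simp

lemma has_wirtinger_derivatives_cnj:
  "has_wirtinger_derivatives F a b z \<Longrightarrow> has_wirtinger_derivatives (\<lambda>w. cnj (F w)) (cnj b) (cnj a) z"
  unfolding has_wirtinger_derivatives_def
  by (drule has_derivative_cnj) (simp add: algebra_simps)

lemma has_wirtinger_derivatives_add:
  "has_wirtinger_derivatives F a b z \<Longrightarrow> has_wirtinger_derivatives G c e z \<Longrightarrow>
   has_wirtinger_derivatives (\<lambda>w. F w + G w) (a + c) (b + e) z"
  unfolding has_wirtinger_derivatives_def
  by (drule (1) has_derivative_add) (simp add: algebra_simps)

lemma has_wirtinger_derivatives_mult:
  "has_wirtinger_derivatives F a b z \<Longrightarrow> has_wirtinger_derivatives G c e z \<Longrightarrow>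
   has_wirtinger_derivatives (\<lambda>w. F w * G w) (a * G z + F z * c) (b * G z + F z * e) z"
  unfolding has_wirtinger_derivatives_def
  by (drule (1) has_derivative_mult) (simp add: algebra_simps)

lemma has_wirtinger_derivatives_cmult:
  "has_wirtinger_derivatives F a b z \<Longrightarrow> has_wirtinger_derivatives (\<lambda>w. c * F w) (c * a) (c * b) z"
  using has_wirtinger_derivatives_mult[OF has_wirtinger_derivatives_const[of c z]] by simp

lemma of_real_Re_eq: "complex_of_real (Re z) = (z + cnj z) / 2"
  by (simp add: complex_add_cnj)

lemma has_wirtinger_derivatives_Re:
  assumes "(F has_field_derivative a) (at z)"
  shows "has_wirtinger_derivatives (\<lambda>w. of_real (Re (F w))) (a / 2) (cnj a / 2) z"
proof -
  have "has_wirtinger_derivatives (\<lambda>w. (F w + cnj (F w)) / 2) ((a + cnj 0) / 2) ((0 + cnj a) / 2) z"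
    unfolding divide_inverse mult.commute[of _ "inverse 2"]
    by (intro has_wirtinger_derivatives_cmult has_wirtinger_derivatives_add has_wirtinger_derivatives_cnj
          has_wirtinger_derivatives_holomorphic assms)
  then show ?thesis
    unfolding of_real_Re_eq by simp
qed

lemma has_wirtinger_derivatives_ln_norm:
  assumes s: "(s has_field_derivative s') (at z)" and nz: "s z \<noteq> 0"
  shows "has_wirtinger_derivatives (\<lambda>w. of_real (ln (cmod (s w)))) (s' / (2 * s z)) (cnj (s' / (2 * s z))) z"
proof -
  have "((\<lambda>w. Re (s w / s z)) \<longlongrightarrow> Re (s z / s z)) (nhds z)"
    using DERIV_isCont[OF s] nz
    by (intro tendsto_intros) (auto simp: isCont_def tendsto_at_iff_tendsto_nhds)
  then have "\<forall>\<^sub>F w in nhds z. Re (s w / s z) > 0"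
    using nz by (intro order_tendstoD) auto
  then have local_log: "\<forall>\<^sub>F w in nhds z.
      of_real (ln (cmod (s z))) + of_real (Re (Ln (s w / s z))) = of_real (ln (cmod (s w)))"
  proof eventually_elim
    case (elim w)
    then have "s w \<noteq> 0"
      by auto
    with nz show ?case
      by (simp add: norm_divide ln_div flip: of_real_add)
  qed
  have "((\<lambda>w. Ln (s w / s z)) has_field_derivative s' / s z) (at z)"
    using nz by (auto intro!: derivative_eq_intros s simp: complex_nonpos_Reals_iff)
  then have "has_wirtinger_derivatives (\<lambda>w. of_real (ln (cmod (s z))) + of_real (Re (Ln (s w / s z))))
               (0 + s' / s z / 2) (0 + cnj (s' / s z) / 2) z"
    by (intro has_wirtinger_derivatives_add has_wirtinger_derivatives_const has_wirtinger_derivatives_Re)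
  then show ?thesis
    by (rule has_wirtinger_derivatives_transform[OF has_wirtinger_derivatives_cong local_log]) simp_all
qed

lemma has_wirtinger_derivatives_real_valued:
  assumes "has_wirtinger_derivatives F a b z" "\<And>w. F w \<in> \<real>"
  shows "b = cnj a"
proof -
  have "(\<lambda>w. cnj (F w)) = F"
    using assms(2) by (simp add: fun_eq_iff Reals_cnj_iff)
  then have "has_wirtinger_derivatives F (cnj b) (cnj a) z"
    using has_wirtinger_derivatives_cnj[OF assms(1)] by simp
  then show ?thesis
    using has_wirtinger_derivatives_wirt_bar[OF assms(1)] by (simp add: has_wirtinger_derivatives_wirt_bar)
qed

lemma wirtinger_second_derivatives_real_valued:
  assumes first: "\<forall>\<^sub>F w in nhds z. has_wirtinger_derivatives F (A w) (cnj (A w)) w"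
    and second: "has_wirtinger_derivatives A a b z"
  shows "wirt (wirt F) z = a" "wirt_bar (wirt F) z = b" "wirt_bar (wirt_bar F) z = cnj a"
proof -
  have "\<forall>\<^sub>F w in nhds z. A w = wirt F w"
    using first by eventually_elim (simp add: has_wirtinger_derivatives_wirt)
  then have "has_wirtinger_derivatives (wirt F) a b z"
    by (rule has_wirtinger_derivatives_transform[OF second])
  then show "wirt (wirt F) z = a" "wirt_bar (wirt F) z = b"
    by (simp_all add: has_wirtinger_derivatives_wirt has_wirtinger_derivatives_wirt_bar)
  have "\<forall>\<^sub>F w in nhds z. cnj (A w) = wirt_bar F w"
    using first by eventually_elim (simp add: has_wirtinger_derivatives_wirt_bar)
  then have "has_wirtinger_derivatives (wirt_bar F) (cnj b) (cnj a) z"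
    by (rule has_wirtinger_derivatives_transform[OF has_wirtinger_derivatives_cnj[OF second]])
  then show "wirt_bar (wirt_bar F) z = cnj a"
    by (rule has_wirtinger_derivatives_wirt_bar)
qed

lemma hessian_det_Re_holomorphic:
  assumes "open S" "g holomorphic_on S" "z \<in> S" "\<And>w. w \<in> S \<Longrightarrow> f0 w = c * Re (g w)"
  shows "hessian_det f0 z = - of_real ((c * cmod (deriv (deriv g) z))\<^sup>2)"
proof -
  define F where "F = (\<lambda>w. complex_of_real (f0 w))"
  define q where "q = of_real c * deriv (deriv g) z"
  have g': "((\<lambda>w. of_real c * g w) has_field_derivative of_real c * deriv g w) (at w)" if "w \<in> S" for w
    using holomorphic_derivI[OF assms(2,1) that] by (rule DERIV_cmult)
  have g'': "((\<lambda>w. of_real c * deriv g w) has_field_derivative q) (at z)"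
    unfolding q_def using holomorphic_derivI[OF holomorphic_deriv[OF assms(2,1)] assms(1,3)]
    by (rule DERIV_cmult)
  have first: "has_wirtinger_derivatives F (of_real c * deriv g w / 2) (cnj (of_real c * deriv g w) / 2) w"
    if "w \<in> S" for w
  proof (rule has_wirtinger_derivatives_transform[OF has_wirtinger_derivatives_Re[OF g'[OF that]]])
    show "\<forall>\<^sub>F v in nhds w. complex_of_real (Re (of_real c * g v)) = F v"
      using eventually_nhds_in_open[OF assms(1) that] by eventually_elim (simp add: F_def assms(4))
  qed
  have "\<forall>\<^sub>F w in nhds z. of_real (Re (of_real c * deriv g w)) = dx F w
                       \<and> of_real (Re (\<i> * (of_real c * deriv g w))) = dy F w"
    using eventually_nhds_in_open[OF assms(1,3)]
    by eventually_elim
      (auto dest!: first simp: has_wirtinger_derivatives_dx has_wirtinger_derivatives_dy complex_eq_iff)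
  then have ev_dx: "\<forall>\<^sub>F w in nhds z. of_real (Re (of_real c * deriv g w)) = dx F w"
    and ev_dy: "\<forall>\<^sub>F w in nhds z. of_real (Re (\<i> * (of_real c * deriv g w))) = dy F w"
    by (auto elim: eventually_mono)
  have dx: "has_wirtinger_derivatives (dx F) (q / 2) (cnj q / 2) z"
    by (rule has_wirtinger_derivatives_transform[OF has_wirtinger_derivatives_Re[OF g''] ev_dx])
  have dy: "has_wirtinger_derivatives (dy F) (\<i> * q / 2) (cnj (\<i> * q) / 2) z"
    by (rule has_wirtinger_derivatives_transform[OF has_wirtinger_derivatives_Re[OF DERIV_cmult[OF g'']] ev_dy])
  have "hessian_det f0 z = (q / 2 + cnj q / 2) * (\<i> * (\<i> * q / 2 - cnj (\<i> * q) / 2))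
                          - (\<i> * (q / 2 - cnj q / 2)) * (\<i> * q / 2 + cnj (\<i> * q) / 2)"
    unfolding hessian_det_def Let_def F_def[symmetric]
    by (simp only: has_wirtinger_derivatives_dx[OF dx] has_wirtinger_derivatives_dy[OF dx]
      has_wirtinger_derivatives_dx[OF dy] has_wirtinger_derivatives_dy[OF dy])
  also have "\<dots> = - (q * cnj q)"
    by (simp add: field_simps)
  also have "q * cnj q = of_real ((c * cmod (deriv (deriv g) z))\<^sup>2)"
    unfolding complex_norm_square[symmetric] q_def by (simp add: norm_mult power_mult_distrib)
  finally show ?thesis .
qed

lemma jordan_domain_open: "jordan_domain D \<Longrightarrow> open D"
  unfolding jordan_domain_def by (metis closed_path_image open_inside simple_path_imp_path)

definition deformation :: "(complex \<Rightarrow> complex) \<Rightarrow> (complex \<Rightarrow> complex) \<Rightarrow> real \<Rightarrow> complex \<Rightarrow> complex" where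
  "deformation g h t w = of_real (2 * Re (g w) + (cmod (h w))\<^sup>2 * t
                                  + Re ((h w)\<^sup>2) * ln (cmod (deriv h w)) * t\<^sup>2)"

definition deformation_w :: "(complex \<Rightarrow> complex) \<Rightarrow> (complex \<Rightarrow> complex) \<Rightarrow> real \<Rightarrow> complex \<Rightarrow> complex" where
  "deformation_w g h t w = deriv g w + of_real t * (deriv h w * cnj (h w))
     + of_real t ^ 2 * (h w * deriv h w * of_real (ln (cmod (deriv h w)))
                        + of_real (Re ((h w)\<^sup>2)) * (deriv (deriv h) w / (2 * deriv h w)))"

lemma has_wirtinger_derivatives_deformation:
  assumes "open U" "g holomorphic_on U" "h holomorphic_on U" "z \<in> U" "deriv h z \<noteq> 0"
  shows "has_wirtinger_derivatives (deformation g h t)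
           (deformation_w g h t z) (cnj (deformation_w g h t z)) z"
proof -
  have g': "((\<lambda>w. 2 * g w) has_field_derivative 2 * deriv g z) (at z)"
    using holomorphic_derivI[OF assms(2,1,4)] by (rule DERIV_cmult)
  have h': "(h has_field_derivative deriv h z) (at z)"
    using holomorphic_derivI[OF assms(3,1,4)] .
  have h'': "(deriv h has_field_derivative deriv (deriv h) z) (at z)"
    using holomorphic_derivI[OF holomorphic_deriv[OF assms(3,1)] assms(1,4)] .
  have hh': "((\<lambda>w. (h w)\<^sup>2) has_field_derivative 2 * (h z * deriv h z)) (at z)"
    using h' by (auto intro!: derivative_eq_intros)
  have half_double: "2 * x / 2 = x" for x :: complex
    by simp
  have expand: "deformation g h t = (\<lambda>w. of_real (Re (2 * g w)) + of_real t * (h w * cnj (h w))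
      + of_real t ^ 2 * (of_real (Re ((h w)\<^sup>2)) * of_real (ln (cmod (deriv h w)))))"
    unfolding deformation_def complex_norm_square[symmetric] by (simp add: fun_eq_iff algebra_simps)
  \<comment> \<open>The rules are applied with unknown derivatives, which are then compared with the claim;
    since the deformation is real, only its w-derivative needs to be matched.\<close>
  have "\<exists>b. has_wirtinger_derivatives (deformation g h t) (deformation_w g h t z) b z"
    unfolding expand
    apply (rule exI, rule has_wirtinger_derivatives_cong)
      apply (rule has_wirtinger_derivatives_add has_wirtinger_derivatives_cmult has_wirtinger_derivatives_mult
        has_wirtinger_derivatives_Re[OF g'] has_wirtinger_derivatives_Re[OF hh']
        has_wirtinger_derivatives_holomorphic[OF h'] has_wirtinger_derivatives_cnj[OF has_wirtinger_derivatives_holomorphic[OF h']]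
        has_wirtinger_derivatives_ln_norm[OF h'' assms(5)])+
     apply (simp only: deformation_w_def half_double complex_cnj_zero mult_zero_right add_0_right)
    apply (rule refl)
    done
  then obtain b where b: "has_wirtinger_derivatives (deformation g h t) (deformation_w g h t z) b z" ..
  have "b = cnj (deformation_w g h t z)"
    by (rule has_wirtinger_derivatives_real_valued[OF b]) (simp add: deformation_def)
  with b show ?thesis by simp
qed

lemma has_wirtinger_derivatives_deformation_w_coefficient:
  assumes "open U" "h holomorphic_on U" "z \<in> U" "\<And>w. w \<in> U \<Longrightarrow> deriv h w \<noteq> 0"
  obtains a2 where "has_wirtinger_derivatives
      (\<lambda>w. h w * deriv h w * of_real (ln (cmod (deriv h w)))
           + of_real (Re ((h w)\<^sup>2)) * (deriv (deriv h) w / (2 * deriv h w)))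
      a2 (of_real (Re (deriv (deriv h) z * cnj (h z) * cnj ((deriv h z)\<^sup>2)) / (cmod (deriv h z))\<^sup>2)) z"
proof -
  have h': "(h has_field_derivative deriv h z) (at z)"
    using holomorphic_derivI[OF assms(2,1,3)] .
  have h'': "(deriv h has_field_derivative deriv (deriv h) z) (at z)"
    using holomorphic_derivI[OF holomorphic_deriv[OF assms(2,1)] assms(1,3)] .
  have hh': "((\<lambda>w. (h w)\<^sup>2) has_field_derivative 2 * (h z * deriv h z)) (at z)"
    using h' by (auto intro!: derivative_eq_intros)
  have "(\<lambda>w. deriv (deriv h) w / (2 * deriv h w)) holomorphic_on U"
    using assms by (auto intro!: holomorphic_intros holomorphic_deriv)
  then have k': "((\<lambda>w. deriv (deriv h) w / (2 * deriv h w)) has_field_derivative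
                   deriv (\<lambda>w. deriv (deriv h) w / (2 * deriv h w)) z) (at z)"
    using holomorphic_derivI assms(1,3) by blast
  have wbar: "h z * deriv h z * cnj (deriv (deriv h) z / (2 * deriv h z))
      + cnj (2 * (h z * deriv h z)) / 2 * (deriv (deriv h) z / (2 * deriv h z))
      = of_real (Re (deriv (deriv h) z * cnj (h z) * cnj ((deriv h z)\<^sup>2)) / (cmod (deriv h z))\<^sup>2)"
    (is "_ = ?c2")
  proof -
    let ?x = "deriv (deriv h) z * cnj (h z) * cnj ((deriv h z)\<^sup>2)"
    have "?c2 = (?x + cnj ?x) / 2 / (deriv h z * cnj (deriv h z))"
      unfolding of_real_divide of_real_Re_eq complex_norm_square ..
    also have "\<dots> = h z * deriv h z * cnj (deriv (deriv h) z / (2 * deriv h z))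
        + cnj (2 * (h z * deriv h z)) / 2 * (deriv (deriv h) z / (2 * deriv h z))"
      using assms(3,4) by (simp add: field_simps power2_eq_square)
    finally show ?thesis ..
  qed
  \<comment> \<open>Only the wbar-derivative is prescribed; the w-derivative a2 involves h''' and is irrelevant.\<close>
  show ?thesis
    apply (rule that, rule has_wirtinger_derivatives_cong)
      apply (rule has_wirtinger_derivatives_add has_wirtinger_derivatives_mult
        has_wirtinger_derivatives_holomorphic[OF h'] has_wirtinger_derivatives_holomorphic[OF h'']
        has_wirtinger_derivatives_holomorphic[OF k'] has_wirtinger_derivatives_Re[OF hh']
        has_wirtinger_derivatives_ln_norm[OF h'' assms(4)[OF assms(3)]])+
     apply (rule refl)
    apply (simp only: mult_zero_left mult_zero_right add_0_left add_0_right)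
    apply (rule wbar)
    done
qed

lemma has_wirtinger_derivatives_deformation_w:
  assumes "open U" "g holomorphic_on U" "h holomorphic_on U" "z \<in> U" "\<And>w. w \<in> U \<Longrightarrow> deriv h w \<noteq> 0"
  obtains a2 where "\<And>t. has_wirtinger_derivatives (deformation_w g h t)
      (deriv (deriv g) z + of_real t * (deriv (deriv h) z * cnj (h z)) + of_real t ^ 2 * a2)
      (of_real t * of_real ((cmod (deriv h z))\<^sup>2)
       + of_real t ^ 2 * of_real (Re (deriv (deriv h) z * cnj (h z) * cnj ((deriv h z)\<^sup>2)) / (cmod (deriv h z))\<^sup>2)) z"
proof -
  let ?c2 = "of_real (Re (deriv (deriv h) z * cnj (h z) * cnj ((deriv h z)\<^sup>2)) / (cmod (deriv h z))\<^sup>2)"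
  have g'': "(deriv g has_field_derivative deriv (deriv g) z) (at z)"
    using holomorphic_derivI[OF holomorphic_deriv[OF assms(2,1)] assms(1,4)] .
  have h': "(h has_field_derivative deriv h z) (at z)"
    using holomorphic_derivI[OF assms(3,1,4)] .
  have h'': "(deriv h has_field_derivative deriv (deriv h) z) (at z)"
    using holomorphic_derivI[OF holomorphic_deriv[OF assms(3,1)] assms(1,4)] .
  have B: "has_wirtinger_derivatives (\<lambda>w. deriv h w * cnj (h w))
      (deriv (deriv h) z * cnj (h z)) (of_real ((cmod (deriv h z))\<^sup>2)) z"
    using has_wirtinger_derivatives_mult[OF has_wirtinger_derivatives_holomorphic[OF h'']
        has_wirtinger_derivatives_cnj[OF has_wirtinger_derivatives_holomorphic[OF h']]]
    unfolding complex_norm_square by simp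
  obtain a2 where C: "has_wirtinger_derivatives
      (\<lambda>w. h w * deriv h w * of_real (ln (cmod (deriv h w)))
           + of_real (Re ((h w)\<^sup>2)) * (deriv (deriv h) w / (2 * deriv h w)))
      a2 ?c2 z"
    using has_wirtinger_derivatives_deformation_w_coefficient[OF assms(1,3,4,5)] .
  show ?thesis
  proof (rule that)
    fix t
    have "has_wirtinger_derivatives (\<lambda>w. deriv g w + of_real t * (deriv h w * cnj (h w)) + of_real t ^ 2 *
        (h w * deriv h w * of_real (ln (cmod (deriv h w)))
         + of_real (Re ((h w)\<^sup>2)) * (deriv (deriv h) w / (2 * deriv h w))))
        (deriv (deriv g) z + of_real t * (deriv (deriv h) z * cnj (h z)) + of_real t ^ 2 * a2)
        (0 + of_real t * of_real ((cmod (deriv h z))\<^sup>2) + of_real t ^ 2 * ?c2) z"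
      by (intro has_wirtinger_derivatives_add has_wirtinger_derivatives_cmult
            has_wirtinger_derivatives_holomorphic[OF g''] B C)
    then show "has_wirtinger_derivatives (deformation_w g h t)
        (deriv (deriv g) z + of_real t * (deriv (deriv h) z * cnj (h z)) + of_real t ^ 2 * a2)
        (of_real t * of_real ((cmod (deriv h z))\<^sup>2) + of_real t ^ 2 * ?c2) z"
      unfolding deformation_w_def[abs_def] add_0_left .
  qed
qed

lemma deformation_second_wirtinger_derivatives:
  assumes "open D" "g holomorphic_on D" "h holomorphic_on D" "z \<in> D" "deriv h z \<noteq> 0"
  obtains a2 where
    "\<And>t. wirt (wirt (deformation g h t)) z
            = deriv (deriv g) z + of_real t * (deriv (deriv h) z * cnj (h z)) + of_real t ^ 2 * a2"
    "\<And>t. wirt_bar (wirt (deformation g h t)) z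
            = of_real t * of_real ((cmod (deriv h z))\<^sup>2)
              + of_real t ^ 2 * of_real (Re (deriv (deriv h) z * cnj (h z) * cnj ((deriv h z)\<^sup>2)) / (cmod (deriv h z))\<^sup>2)"
    "\<And>t. wirt_bar (wirt_bar (deformation g h t)) z = cnj (wirt (wirt (deformation g h t)) z)"
proof -
  define U where "U = D \<inter> deriv h -` (- {0})"
  have U: "open U"
    unfolding U_def using holomorphic_on_imp_continuous_on[OF holomorphic_deriv[OF assms(3,1)]] assms(1)
    by (intro continuous_open_preimage) auto
  have z_U: "z \<in> U" and "U \<subseteq> D"
    using assms(4,5) by (auto simp: U_def)
  then have g_U: "g holomorphic_on U" and h_U: "h holomorphic_on U"
    using assms(2,3) by (auto intro: holomorphic_on_subset)
  have h'_U: "\<And>w. w \<in> U \<Longrightarrow> deriv h w \<noteq> 0"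
    by (simp add: U_def)
  obtain a2 where second: "\<And>t. has_wirtinger_derivatives (deformation_w g h t)
      (deriv (deriv g) z + of_real t * (deriv (deriv h) z * cnj (h z)) + of_real t ^ 2 * a2)
      (of_real t * of_real ((cmod (deriv h z))\<^sup>2)
       + of_real t ^ 2 * of_real (Re (deriv (deriv h) z * cnj (h z) * cnj ((deriv h z)\<^sup>2)) / (cmod (deriv h z))\<^sup>2)) z"
    using has_wirtinger_derivatives_deformation_w[OF U g_U h_U z_U h'_U] by blast
  have first: "\<forall>\<^sub>F w in nhds z. has_wirtinger_derivatives (deformation g h t)
      (deformation_w g h t w) (cnj (deformation_w g h t w)) w" for t
    using eventually_nhds_in_open[OF U z_U]
    by eventually_elim (simp add: has_wirtinger_derivatives_deformation[OF U g_U h_U] h'_U)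
  show ?thesis
    by (rule that[of a2]) (simp_all add: wirtinger_second_derivatives_real_valued[OF first second])
qed

lemma has_field_derivative_csqrt_mult_cnj:
  assumes Q: "(Q has_field_derivative q) (at 0)" and R: "(R has_field_derivative r) (at 0)"
    and R0: "R 0 = cnj (Q 0)" and Q0: "Q 0 \<noteq> 0"
  shows "((\<lambda>u. csqrt (Q u * R u)) has_field_derivative
           (q * R 0 + r * Q 0) / (2 * of_real (cmod (Q 0)))) (at 0)"
proof -
  have QR0: "Q 0 * R 0 = of_real ((cmod (Q 0))\<^sup>2)"
    unfolding R0 complex_norm_square ..
  have "Q 0 * R 0 \<notin> \<real>\<^sub>\<le>\<^sub>0"
    using Q0 unfolding QR0 by (simp add: complex_nonpos_Reals_iff)
  moreover have "csqrt (Q 0 * R 0) = of_real (cmod (Q 0))"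
    unfolding QR0 by simp
  ultimately show ?thesis
    using has_field_derivative_csqrt'[OF DERIV_mult[OF Q R]] by simp
qed

lemma tendsto_second_order_remainder:
  fixes \<phi> :: "complex \<Rightarrow> complex"
  assumes "(\<phi> has_field_derivative d) (at 0)"
  shows "((\<lambda>t::real. (of_real t * \<phi> 0 + of_real t ^ 2 * d - of_real t * \<phi> (of_real t)) / of_real (t\<^sup>2))
           \<longlongrightarrow> 0) (at 0)"
proof -
  have quotient: "((\<lambda>u. (\<phi> u - \<phi> 0) / u) \<longlongrightarrow> d) (at 0)"
    using assms unfolding DERIV_def by simp
  have "filterlim (\<lambda>t::real. complex_of_real t) (at 0) (at 0)"
    by (rule filterlim_atI) (auto intro!: tendsto_eq_intros simp: eventually_at_filter)
  from filterlim_compose[OF quotient this]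
  have "((\<lambda>t::real. (\<phi> (of_real t) - \<phi> 0) / of_real t) \<longlongrightarrow> d) (at 0)"
    by simp
  from tendsto_diff[OF tendsto_const[of d] this]
  have "((\<lambda>t::real. d - (\<phi> (of_real t) - \<phi> 0) / of_real t) \<longlongrightarrow> 0) (at 0)"
    by simp
  then show ?thesis
    by (rule Lim_transform_eventually)
      (auto simp: eventually_at_filter field_simps power2_eq_square)
qed

lemma tendsto_csqrt_quadratic_remainder:
  fixes a0 a1 a2 :: complex
  assumes "a0 \<noteq> 0"
  defines "Q \<equiv> \<lambda>t::real. a0 + of_real t * a1 + of_real t ^ 2 * a2"
  shows "((\<lambda>t. (of_real t * of_real (cmod a0) + of_real t ^ 2 * of_real (Re (a1 * cnj a0) / cmod a0)
               - of_real t * csqrt (Q t * cnj (Q t))) / of_real (t\<^sup>2)) \<longlongrightarrow> 0) (at 0)"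
proof -
  define P where "P = (\<lambda>u. a0 + u * a1 + u ^ 2 * a2)"
  define R where "R = (\<lambda>u. cnj a0 + u * cnj a1 + u ^ 2 * cnj a2)"
  have "((\<lambda>u. csqrt (P u * R u)) has_field_derivative
          (a1 * R 0 + cnj a1 * P 0) / (2 * of_real (cmod (P 0)))) (at 0)"
    by (rule has_field_derivative_csqrt_mult_cnj)
      (auto simp: P_def R_def assms(1) intro!: derivative_eq_intros)
  moreover have "(a1 * R 0 + cnj a1 * P 0) / (2 * of_real (cmod (P 0))) = of_real (Re (a1 * cnj a0) / cmod a0)"
    unfolding of_real_divide of_real_Re_eq using assms(1) by (simp add: P_def R_def field_simps)
  ultimately have deriv:
    "((\<lambda>u. csqrt (P u * R u)) has_field_derivative of_real (Re (a1 * cnj a0) / cmod a0)) (at 0)"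
    by simp
  have "P 0 * R 0 = of_real ((cmod a0)\<^sup>2)"
    unfolding P_def R_def complex_norm_square by simp
  then have at_0: "csqrt (P 0 * R 0) = of_real (cmod a0)"
    by simp
  have on_reals: "Q t * cnj (Q t) = P (of_real t) * R (of_real t)" for t
    by (simp add: Q_def P_def R_def)
  show ?thesis
    using tendsto_second_order_remainder[OF deriv] unfolding at_0 on_reals .
qed

theorem proposition1:
  fixes D :: "complex set" and f0 :: "complex \<Rightarrow> real"
    and g h s :: "complex \<Rightarrow> complex"
  assumes "jordan_domain D"
    and "harmonic_on D f0"
    and "\<forall>w\<in>D. hessian_det f0 w \<noteq> 0"
    and "g holomorphic_on D"
    and "\<forall>w\<in>D. Re (g w) = f0 w / 2"
    and "continuous_on D s"
    and "\<forall>w\<in>D. (s w)\<^sup>2 = deriv (deriv g) w"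
    and "\<forall>w\<in>D. (h has_field_derivative s w) (at w)"
  defines "f \<equiv> (\<lambda>(t::real) (w::complex). complex_of_real
              (2 * Re (g w) + (cmod (h w))\<^sup>2 * t
               + Re ((h w)\<^sup>2) * ln (cmod (deriv h w)) * t\<^sup>2))"
  shows "\<forall>w\<in>D. ((\<lambda>t. (wirt_bar (wirt (f t)) w
                   - of_real t * csqrt (wirt (wirt (f t)) w * wirt_bar (wirt_bar (f t)) w))
                   / of_real (t\<^sup>2)) \<longlongrightarrow> 0) (at 0)"
proof
  fix w0 assume w0: "w0 \<in> D"
  have D: "open D"
    using assms(1) by (rule jordan_domain_open)
  have h: "h holomorphic_on D"
    using assms(8) D holomorphic_on_open by blast
  have h'_w0: "deriv h w0 = s w0"
    using assms(8) w0 DERIV_imp_deriv by blast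
  have "deriv (deriv g) w0 \<noteq> 0"
    using hessian_det_Re_holomorphic[OF D assms(4) w0, of f0 2] assms(3,5) w0 by auto
  then have g''_w0: "deriv (deriv g) w0 = (deriv h w0)\<^sup>2" and "deriv h w0 \<noteq> 0"
    using assms(7) w0 h'_w0 by auto
  obtain a2 where derivs:
    "\<And>t. wirt (wirt (deformation g h t)) w0
            = deriv (deriv g) w0 + of_real t * (deriv (deriv h) w0 * cnj (h w0)) + of_real t ^ 2 * a2"
    "\<And>t. wirt_bar (wirt (deformation g h t)) w0
            = of_real t * of_real ((cmod (deriv h w0))\<^sup>2)
              + of_real t ^ 2 * of_real (Re (deriv (deriv h) w0 * cnj (h w0) * cnj ((deriv h w0)\<^sup>2)) / (cmod (deriv h w0))\<^sup>2)"
    "\<And>t. wirt_bar (wirt_bar (deformation g h t)) w0 = cnj (wirt (wirt (deformation g h t)) w0)"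
    using deformation_second_wirtinger_derivatives[OF D assms(4) h w0 \<open>deriv h w0 \<noteq> 0\<close>] by blast
  have "f = deformation g h"
    by (simp add: f_def deformation_def fun_eq_iff)
  show "((\<lambda>t. (wirt_bar (wirt (f t)) w0
                   - of_real t * csqrt (wirt (wirt (f t)) w0 * wirt_bar (wirt_bar (f t)) w0))
                   / of_real (t\<^sup>2)) \<longlongrightarrow> 0) (at 0)"
    using tendsto_csqrt_quadratic_remainder[of "(deriv h w0)\<^sup>2" "deriv (deriv h) w0 * cnj (h w0)" a2]
      \<open>deriv h w0 \<noteq> 0\<close>
    unfolding \<open>f = deformation g h\<close> derivs g''_w0 norm_power by simp
qed

end
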